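(* Let $n=n_1+n_2+n_3=p+q$ with positive integers, let $G=U(n)$, let $L=U(n_1)\times U(n_2)\times U(n_3)$ and $H=U(p)\times U(q)$ be the natural block-diagonal subgroups of $G$, and let $G'=O(n)$. If $\min(p,q)\ge 3$ and $\min(n_1,n_2,n_3)\ge 2$, then $LG'H\subsetneq G$.
   Context: $LG'H=\{xyz:x\in L,y\in G',z\in H\}$. *)

theory Defs
  imports "Jordan_Normal_Form.Schur_Decomposition"
begin

definition unitary_group :: "nat \<Rightarrow> complex mat set" where
  "unitary_group n = {U \<in> carrier_mat n n. U * mat_adjoint U = 1\<^sub>m n}"

definition orthogonal_group_in_U :: "nat \<Rightarrow> complex mat set" where
  "orthogonal_group_in_U n =
     {map_mat complex_of_real Q | Q. Q \<in> carrier_mat n n \<and> Q * transpose_mat Q = 1\<^sub>m n}"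

definition block_U2 :: "nat \<Rightarrow> nat \<Rightarrow> complex mat set" where
  "block_U2 p q =
     {four_block_mat A (0\<^sub>m p q) (0\<^sub>m q p) B | A B. A \<in> unitary_group p \<and> B \<in> unitary_group q}"

definition block_U3 :: "nat \<Rightarrow> nat \<Rightarrow> nat \<Rightarrow> complex mat set" where
  "block_U3 n1 n2 n3 =
     {four_block_mat (four_block_mat A (0\<^sub>m n1 n2) (0\<^sub>m n2 n1) B)
                     (0\<^sub>m (n1 + n2) n3) (0\<^sub>m n3 (n1 + n2)) C
      | A B C. A \<in> unitary_group n1 \<and> B \<in> unitary_group n2 \<and> C \<in> unitary_group n3}"

end

theory Submission
  imports Defs
begin

text \<open>
  If \<open>W = X Y Z\<close> with \<open>X \<in> L\<close>, \<open>Y \<in> O(n)\<close> and \<open>Z \<in> H\<close>, then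
  \<open>S = Z\<^sup>* (Z\<^sup>*)\<^sup>T\<close> is a symmetric unitary matrix which is block diagonal for
  \<open>n = p + q\<close>, and \<open>W S W\<^sup>T = X X\<^sup>T\<close> is block diagonal for \<open>n = n\<^sub>1 + n\<^sub>2 + n\<^sub>3\<close>,
  because \<open>Y Y\<^sup>T = 1\<close>. The unitary witness \<open>W\<close> maps the first three coordinates of each
  block of \<open>H\<close> to the first two coordinates of each block of \<open>L\<close> by \<open>M / \<surd>5\<close>, for an
  explicit \<open>6 \<times> 6\<close> matrix \<open>M\<close> with \<open>M M\<^sup>* = 5 I\<close>, and permutes the remaining
  coordinates. For this \<open>W\<close>, the linear conditions on \<open>S\<close> force its first row to vanish,
  which is impossible for a unitary matrix.
\<close>

lemma mat_adjoint_dim [simp]: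
  "dim_row (mat_adjoint A) = dim_col A" "dim_col (mat_adjoint A) = dim_row A"
  unfolding mat_adjoint_def by auto

lemma mat_adjoint_index [simp]:
  "i < dim_col A \<Longrightarrow> j < dim_row A \<Longrightarrow> mat_adjoint A $$ (i, j) = conjugate (A $$ (j, i))"
  unfolding mat_adjoint_def by (simp add: mat_of_rows_def)

lemma mat_adjoint_carrier [simp]: "A \<in> carrier_mat n m \<Longrightarrow> mat_adjoint A \<in> carrier_mat m n"
  unfolding carrier_mat_def by simp

lemma mat_adjoint_adjoint [simp]: "mat_adjoint (mat_adjoint A) = A"
  by (rule eq_matI) auto

lemma mat_adjoint_transpose: "mat_adjoint (transpose_mat A) = transpose_mat (mat_adjoint A)"
  by (rule eq_matI) auto

lemma index_mult_mat_sum: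
  assumes "A \<in> carrier_mat n m" "B \<in> carrier_mat m k" "i < n" "j < k"
  shows "(A * B) $$ (i, j) = (\<Sum>l<m. A $$ (i, l) * B $$ (l, j))"
  using assms by (auto simp: scalar_prod_def lessThan_atLeast0 intro: sum.cong)

lemma mat_adjoint_mult:
  fixes A B :: "complex mat"
  assumes "A \<in> carrier_mat n m" "B \<in> carrier_mat m k"
  shows "mat_adjoint (A * B) = mat_adjoint B * mat_adjoint A"
proof (rule eq_matI)
  fix i j
  assume "i < dim_row (mat_adjoint B * mat_adjoint A)" "j < dim_col (mat_adjoint B * mat_adjoint A)"
  with assms have "i < k" "j < n" by auto
  with assms show "mat_adjoint (A * B) $$ (i, j) = (mat_adjoint B * mat_adjoint A) $$ (i, j)"
    by (simp add: index_mult_mat_sum[of _ n m _ k] index_mult_mat_sum[of _ k m _ n] cnj_sum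
        mult.commute del: index_mult_mat(1))
qed (use assms in auto)

lemma unitary_groupD:
  assumes "U \<in> unitary_group n"
  shows "U \<in> carrier_mat n n" "U * mat_adjoint U = 1\<^sub>m n" "mat_adjoint U * U = 1\<^sub>m n"
  using assms mat_mult_left_right_inverse[of U n "mat_adjoint U"]
  unfolding unitary_group_def by auto

lemma unitary_group_mult:
  assumes "A \<in> unitary_group n" "B \<in> unitary_group n"
  shows "A * B \<in> unitary_group n"
proof -
  note A = unitary_groupD[OF assms(1)] and B = unitary_groupD[OF assms(2)]
  have "A * B * mat_adjoint (A * B) = A * (B * (mat_adjoint B * mat_adjoint A))"
    using A B
    by (simp add: mat_adjoint_mult[of _ n n] assoc_mult_mat[of A n n B n _ n]
        mult_carrier_mat[of _ n n _ n])
  also have "B * (mat_adjoint B * mat_adjoint A) = mat_adjoint A"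
    using A B by (simp add: assoc_mult_mat[of B n n _ n _ n, symmetric])
  also have "A * mat_adjoint A = 1\<^sub>m n" by (rule A(2))
  finally show ?thesis using A B unfolding unitary_group_def by auto
qed

lemma unitary_group_row_nonzero:
  assumes "U \<in> unitary_group n" "i < n"
  obtains j where "j < n" "U $$ (i, j) \<noteq> 0"
proof (rule ccontr)
  assume "\<not> thesis"
  with that have row_zero: "U $$ (i, j) = 0" if "j < n" for j using \<open>j < n\<close> by blast
  note U = unitary_groupD[OF assms(1)]
  have "1 = (U * mat_adjoint U) $$ (i, i)" using U(2) assms(2) by simp
  also have "\<dots> = (\<Sum>j<n. U $$ (i, j) * conjugate (U $$ (i, j)))"
    using U(1) assms(2) by (simp add: index_mult_mat_sum[of _ n n _ n] del: index_mult_mat(1))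
  also have "\<dots> = 0" using row_zero by simp
  finally show False by simp
qed

lemma four_block_diag_index:
  assumes "A \<in> carrier_mat a a" "B \<in> carrier_mat b b" "i < a + b" "j < a + b"
  shows "four_block_mat A (0\<^sub>m a b) (0\<^sub>m b a) B $$ (i, j) =
    (if i < a then if j < a then A $$ (i, j) else 0 else if j < a then 0 else B $$ (i - a, j - a))"
  using assms by (subst index_mat_four_block) auto

lemma mat_adjoint_four_block_diag:
  fixes A B :: "complex mat"
  assumes "A \<in> carrier_mat a a" "B \<in> carrier_mat b b"
  shows "mat_adjoint (four_block_mat A (0\<^sub>m a b) (0\<^sub>m b a) B)
    = four_block_mat (mat_adjoint A) (0\<^sub>m a b) (0\<^sub>m b a) (mat_adjoint B)"
  using assms by (intro eq_matI) (auto simp: four_block_diag_index)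

lemma unitary_group_four_block_diag:
  assumes "A \<in> unitary_group a" "B \<in> unitary_group b"
  shows "four_block_mat A (0\<^sub>m a b) (0\<^sub>m b a) B \<in> unitary_group (a + b)"
proof -
  note A = unitary_groupD[OF assms(1)] and B = unitary_groupD[OF assms(2)]
  have "four_block_mat A (0\<^sub>m a b) (0\<^sub>m b a) B
      * four_block_mat (mat_adjoint A) (0\<^sub>m a b) (0\<^sub>m b a) (mat_adjoint B)
      = four_block_mat (1\<^sub>m a) (0\<^sub>m a b) (0\<^sub>m b a) (1\<^sub>m b)"
    using A B by (subst mult_four_block_mat[of _ a a _ b _ b]) auto
  then show ?thesis
    using A B by (simp add: unitary_group_def mat_adjoint_four_block_diag)
qed

lemma block_U2_unitary: "block_U2 p q \<subseteq> unitary_group (p + q)"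
  unfolding block_U2_def by (auto intro: unitary_group_four_block_diag)

lemma block_U3_unitary: "block_U3 n1 n2 n3 \<subseteq> unitary_group (n1 + n2 + n3)"
  unfolding block_U3_def by (auto intro!: unitary_group_four_block_diag)

lemma orthogonal_group_in_UD:
  assumes "Y \<in> orthogonal_group_in_U n"
  shows "Y \<in> carrier_mat n n" "Y * transpose_mat Y = 1\<^sub>m n" "mat_adjoint Y = transpose_mat Y"
proof -
  obtain Q where Q: "Y = map_mat complex_of_real Q" "Q \<in> carrier_mat n n"
    "Q * transpose_mat Q = 1\<^sub>m n"
    using assms unfolding orthogonal_group_in_U_def by auto
  show "Y \<in> carrier_mat n n" using Q by simp
  show "mat_adjoint Y = transpose_mat Y" using Q by (intro eq_matI) auto
  have "Y * transpose_mat Y = map_mat complex_of_real (Q * transpose_mat Q)"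
    using Q(1,2)
    by (simp add: map_mat_transpose of_real_hom.mat_hom_mult[of Q n n "transpose_mat Q" n])
  then show "Y * transpose_mat Y = 1\<^sub>m n" using Q by (simp add: of_real_hom.mat_hom_one)
qed

lemma orthogonal_group_in_U_unitary: "orthogonal_group_in_U n \<subseteq> unitary_group n"
  using orthogonal_group_in_UD unfolding unitary_group_def by auto

lemma block_orthogonal_products_unitary:
  assumes "n1 + n2 + n3 = p + q"
  shows "{X * Y * Z | X Y Z. X \<in> block_U3 n1 n2 n3 \<and> Y \<in> orthogonal_group_in_U (p + q)
    \<and> Z \<in> block_U2 p q} \<subseteq> unitary_group (p + q)"
  using block_U3_unitary[of n1 n2 n3] orthogonal_group_in_U_unitary block_U2_unitary assms
  by (force intro!: unitary_group_mult)

definition block_diagonal :: "(nat \<Rightarrow> 'b) \<Rightarrow> 'a :: zero mat \<Rightarrow> bool" where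
  "block_diagonal b A \<longleftrightarrow> (\<forall>i < dim_row A. \<forall>j < dim_col A. b i \<noteq> b j \<longrightarrow> A $$ (i, j) = 0)"

lemma block_diagonalD:
  "block_diagonal b A \<Longrightarrow> i < dim_row A \<Longrightarrow> j < dim_col A \<Longrightarrow> b i \<noteq> b j \<Longrightarrow> A $$ (i, j) = 0"
  unfolding block_diagonal_def by blast

lemma block_diagonal_mult:
  assumes "A \<in> carrier_mat n m" "B \<in> carrier_mat m k" "block_diagonal b A" "block_diagonal b B"
  shows "block_diagonal b (A * B)"
  unfolding block_diagonal_def
proof (intro allI impI)
  fix i j assume ij: "i < dim_row (A * B)" "j < dim_col (A * B)" "b i \<noteq> b j"
  have "A $$ (i, l) * B $$ (l, j) = 0" if "l < m" for l
    using assms ij that block_diagonalD[of b A i l] block_diagonalD[of b B l j] by fastforce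
  then show "(A * B) $$ (i, j) = 0"
    using assms ij by (simp add: index_mult_mat_sum del: index_mult_mat(1))
qed

lemma block_diagonal_transpose: "block_diagonal b A \<Longrightarrow> block_diagonal b (transpose_mat A)"
  unfolding block_diagonal_def by simp

lemma block_diagonal_adjoint: "block_diagonal b A \<Longrightarrow> block_diagonal b (mat_adjoint A)"
  unfolding block_diagonal_def by simp

definition block2_index :: "nat \<Rightarrow> nat \<Rightarrow> nat" where
  "block2_index p i = (if i < p then 0 else 1)"

definition block3_index :: "nat \<Rightarrow> nat \<Rightarrow> nat \<Rightarrow> nat" where
  "block3_index n1 n2 i = (if i < n1 then 0 else if i < n1 + n2 then 1 else 2)"

lemma block_U2_block_diagonal: "Z \<in> block_U2 p q \<Longrightarrow> block_diagonal (block2_index p) Z"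
  unfolding block_U2_def unitary_group_def block_diagonal_def block2_index_def
  by (auto simp: four_block_diag_index)

lemma block_U3_block_diagonal: "X \<in> block_U3 n1 n2 n3 \<Longrightarrow> block_diagonal (block3_index n1 n2) X"
  unfolding block_U3_def unitary_group_def block_diagonal_def block3_index_def
  by (auto simp: four_block_diag_index)

lemma block_orthogonal_product_invariant:
  fixes X Y Z :: "complex mat"
  assumes X: "X \<in> carrier_mat n n" "block_diagonal b X"
    and Y: "Y \<in> orthogonal_group_in_U n"
    and Z: "Z \<in> unitary_group n" "block_diagonal c Z"
  obtains S where "S \<in> unitary_group n" "transpose_mat S = S" "block_diagonal c S"
    "block_diagonal b (X * Y * Z * S * transpose_mat (X * Y * Z))"
proof
  note Y = orthogonal_group_in_UD[OF Y] and Z = unitary_groupD[OF Z(1)] Z(2)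
  define A where "A = mat_adjoint Z"
  define S where "S = A * transpose_mat A"
  have A: "A \<in> carrier_mat n n" "Z * A = 1\<^sub>m n" "A * Z = 1\<^sub>m n"
    using Z unfolding A_def by auto
  have At: "transpose_mat A * transpose_mat Z = 1\<^sub>m n"
    using A Z by (simp flip: transpose_mult[of Z n n A n])
  have S: "S \<in> carrier_mat n n" unfolding S_def using A by simp
  note carriers = X(1) Y(1) Z(1) A(1) S mult_carrier_mat[of _ n n _ n] transpose_carrier_mat
  show "transpose_mat S = S"
    unfolding S_def using A by (simp add: transpose_mult[of _ n n _ n])
  show "block_diagonal c S"
    unfolding S_def A_def
    using Z
    by (intro block_diagonal_mult[of _ n n _ n] block_diagonal_transpose block_diagonal_adjoint) auto
  have "mat_adjoint S = transpose_mat Z * Z"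
    unfolding S_def A_def
    using Z by (simp add: mat_adjoint_mult[of _ n n _ n] mat_adjoint_transpose)
  then have "S * mat_adjoint S = A * (transpose_mat A * transpose_mat Z) * Z"
    unfolding S_def using carriers by (simp add: assoc_mult_mat[of _ n n _ n _ n])
  then show "S \<in> unitary_group n"
    using A At S unfolding unitary_group_def by simp
  have ZSZ: "Z * S * transpose_mat Z = 1\<^sub>m n"
  proof -
    have "Z * S * transpose_mat Z = (Z * A) * (transpose_mat A * transpose_mat Z)"
      unfolding S_def using carriers by (simp add: assoc_mult_mat[of _ n n _ n _ n])
    then show ?thesis using A At by simp
  qed
  have "X * Y * Z * S * transpose_mat (X * Y * Z)
      = X * (Y * ((Z * S * transpose_mat Z) * transpose_mat Y)) * transpose_mat X"
    using carriers by (simp add: transpose_mult[of _ n n _ n] assoc_mult_mat[of _ n n _ n _ n])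
  also have "\<dots> = X * transpose_mat X"
    using ZSZ Y X by simp
  finally show "block_diagonal b (X * Y * Z * S * transpose_mat (X * Y * Z))"
    using X by (simp add: block_diagonal_mult[of _ n n _ n] block_diagonal_transpose)
qed

definition M6 :: "nat \<Rightarrow> nat \<Rightarrow> complex" where
  "M6 s t = [[- \<i>, \<i>, 0, 1, -1, \<i>], [\<i>, \<i>, 1, - \<i>, 0, -1], [0, -1, -1, - \<i>, 1, \<i>],
             [1, 1, \<i>, 1, 1, 0], [\<i>, 0, - \<i>, 1, - \<i>, 1], [\<i>, - \<i>, \<i>, 0, -1, \<i>]] ! s ! t"

lemma sum_lessThan_6: "(\<Sum>t<6. f t) = f 0 + f 1 + f 2 + f 3 + f 4 + f (5::nat)"
  by (simp add: eval_nat_numeral)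

lemma M6_rows_orthogonal:
  assumes "s < 6" "s' < 6"
  shows "(\<Sum>t<6. M6 s t * cnj (M6 s' t)) = (if s = s' then 5 else 0)"
proof -
  have "s \<in> {0, 1, 2, 3, 4, 5}" "s' \<in> {0, 1, 2, 3, 4, 5}" using assms by auto
  then show ?thesis by (auto simp: sum_lessThan_6 M6_def complex_eq_iff)
qed

lemma M6_kernel_vector:
  fixes x :: "nat \<Rightarrow> complex"
  assumes support: "\<And>t. 3 \<le> t \<Longrightarrow> t < 6 \<Longrightarrow> x t = 0" and b: "b < (3::nat)"
    and eq: "\<And>s. s < 6 \<Longrightarrow> s div 2 \<noteq> b \<Longrightarrow> (\<Sum>t<6. M6 s t * x t) = 0"
  shows "x 0 = 0"
proof -
  have x: "x 3 = 0" "x 4 = 0" "x 5 = 0" by (rule support; simp)+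
  consider "b = 0" | "b = 1" | "b = 2" using b by linarith
  then show ?thesis
  proof cases
    case 1
    with eq[of 2] eq[of 3] eq[of 4] show ?thesis
      by (simp add: sum_lessThan_6 M6_def x complex_eq_iff)
  next
    case 2
    with eq[of 0] eq[of 1] eq[of 4] show ?thesis
      by (simp add: sum_lessThan_6 M6_def x complex_eq_iff)
  next
    case 3
    with eq[of 0] eq[of 1] eq[of 2] show ?thesis
      by (simp add: sum_lessThan_6 M6_def x complex_eq_iff)
  qed
qed

lemma M6_kernel_symmetric:
  fixes u :: "nat \<Rightarrow> nat \<Rightarrow> complex"
  assumes sym: "\<And>t t'. t < 6 \<Longrightarrow> t' < 6 \<Longrightarrow> u t t' = u t' t"
    and support: "\<And>t t'. t < 3 \<Longrightarrow> 3 \<le> t' \<Longrightarrow> t' < 6 \<Longrightarrow> u t t' = 0"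
    and eq: "\<And>s s'. s < 6 \<Longrightarrow> s' < 6 \<Longrightarrow> s div 2 \<noteq> s' div 2 \<Longrightarrow>
      (\<Sum>t'<6. M6 s' t' * (\<Sum>t<6. M6 s t * u t t')) = 0"
    and "r < 3"
  shows "u 0 r = 0"
proof -
  define E where "E s s' = (\<Sum>t'<6. M6 s' t' * (\<Sum>t<6. M6 s t * u t t'))" for s s'
  have E: "E s s' = 0" if "s < 6" "s' < 6" "s div 2 \<noteq> s' div 2" for s s'
    unfolding E_def using that by (rule eq)
  have sym': "u t t' = u t' t" if "t' < t" "t < 6" for t t' using that by (simp add: sym)
  have off_block: "u t t' = 0" "u t' t = 0" if "t < 3" "3 \<le> t'" "t' < 6" for t t'
    using that support[of t t'] sym[of t' t] by simp_all
  note expand = E_def sum_lessThan_6 M6_def sym' off_block complex_eq_iff algebra_simps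
  \<comment> \<open>The coefficients below are an explicit certificate, found by Gaussian elimination.\<close>
  have u00: "20 * u 0 0 = (2 + 4*\<i>) * E 0 2 + 2 * E 0 3 - (6 + 4*\<i>) * E 0 4 + (3 + 3*\<i>) * E 0 5
      + (1 - 3*\<i>) * E 1 2 - 4*\<i> * E 1 3 - (4 - 2*\<i>) * E 1 4 - 10 * E 1 5
      - 6*\<i> * E 2 5 + (3 - \<i>) * E 3 4 + (2 - 4*\<i>) * E 3 5"
    by (simp add: expand)
  have u01: "10 * u 0 1 = - (1 + \<i>) * E 0 2 - 2 * E 0 3 + (1 + 3*\<i>) * E 0 4 - (1 + 2*\<i>) * E 0 5
      - (1 - 2*\<i>) * E 1 2 + (3 + \<i>) * E 1 5 + 2*\<i> * E 2 4 + 2*\<i> * E 2 5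
      - (1 + 2*\<i>) * E 3 4 - (1 + \<i>) * E 3 5"
    by (simp add: expand)
  have u02: "10 * u 0 2 = - (3 + \<i>) * E 0 2 + 2 * E 0 3 - (1 - \<i>) * E 0 4 + (1 - 2*\<i>) * E 0 5
      + (1 + 2*\<i>) * E 1 2 + 2 * E 1 4 + (1 - \<i>) * E 1 5 + E 3 4 + (1 - 3*\<i>) * E 3 5"
    by (simp add: expand)
  have "r = 0 \<or> r = 1 \<or> r = 2" using \<open>r < 3\<close> by auto
  then show ?thesis using u00 u01 u02 by (auto simp: E)
qed

definition kappa :: complex where
  "kappa = complex_of_real (1 / sqrt 5)"

lemma kappa_nonzero: "kappa \<noteq> 0"
  unfolding kappa_def by simp

lemma kappa_times_cnj: "kappa * cnj kappa = 1 / 5"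
  unfolding kappa_def by (simp flip: of_real_mult)

definition core_row :: "nat \<Rightarrow> nat \<Rightarrow> nat \<Rightarrow> nat" where
  "core_row n1 n2 t = (if t < 2 then t else if t < 4 then n1 + (t - 2) else n1 + n2 + (t - 4))"

definition core_col :: "nat \<Rightarrow> nat \<Rightarrow> nat" where
  "core_col p t = (if t < 3 then t else p + (t - 3))"

locale block_sizes =
  fixes n1 n2 n3 p q :: nat
  assumes dims: "n1 + n2 + n3 = p + q"
    and blocks_L: "2 \<le> n1" "2 \<le> n2" "2 \<le> n3"
    and blocks_H: "3 \<le> p" "3 \<le> q"
begin

abbreviation "N \<equiv> p + q"
abbreviation "core_rows \<equiv> core_row n1 n2 ` {..<6}"
abbreviation "core_cols \<equiv> core_col p ` {..<6}"

lemma core_row_less: "t < 6 \<Longrightarrow> core_row n1 n2 t < N"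
  using dims blocks_L unfolding core_row_def by auto

lemma core_col_less: "t < 6 \<Longrightarrow> core_col p t < N"
  using blocks_H unfolding core_col_def by auto

lemma inj_core_row: "inj_on (core_row n1 n2) {..<6}"
  using blocks_L unfolding inj_on_def core_row_def by auto

lemma inj_core_col: "inj_on (core_col p) {..<6}"
  using blocks_H unfolding inj_on_def core_col_def by auto

lemma block3_index_core_row: "t < 6 \<Longrightarrow> block3_index n1 n2 (core_row n1 n2 t) = t div 2"
  using blocks_L unfolding core_row_def block3_index_def by auto

lemma block2_index_core_col: "t < 6 \<Longrightarrow> block2_index p (core_col p t) = (if t < 3 then 0 else 1)"
  using blocks_H unfolding core_col_def block2_index_def by auto

lemma obtain_off_core_bijection:
  obtains f where "bij_betw f ({..<N} - core_rows) ({..<N} - core_cols)"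
proof -
  have "core_rows \<subseteq> {..<N}" "core_cols \<subseteq> {..<N}"
    using core_row_less core_col_less by auto
  then have "card ({..<N} - core_rows) = card ({..<N} - core_cols)"
    by (simp add: card_Diff_subset card_image inj_core_row inj_core_col)
  then show ?thesis
    using that finite_same_card_bij[of "{..<N} - core_rows" "{..<N} - core_cols"] by auto
qed

end

locale witness_layout = block_sizes +
  fixes f :: "nat \<Rightarrow> nat"
  assumes f_bij:
    "bij_betw f ({..<p + q} - core_row n1 n2 ` {..<6}) ({..<p + q} - core_col p ` {..<6})"
begin

definition witness :: "complex mat" where
  "witness = mat N N (\<lambda>(i, j).
     if i \<in> core_rows then
       if j \<in> core_cols
       then kappa * M6 (the_inv_into {..<6} (core_row n1 n2) i) (the_inv_into {..<6} (core_col p) j)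
       else 0
     else of_bool (j = f i))"

lemma f_maps: "i < N \<Longrightarrow> i \<notin> core_rows \<Longrightarrow> f i < N \<and> f i \<notin> core_cols"
  using f_bij unfolding bij_betw_def by auto

lemma witness_carrier: "witness \<in> carrier_mat N N"
  unfolding witness_def by simp

lemma witness_core: "s < 6 \<Longrightarrow> t < 6 \<Longrightarrow> witness $$ (core_row n1 n2 s, core_col p t) = kappa * M6 s t"
  unfolding witness_def
  using core_row_less core_col_less
    the_inv_into_f_f[OF inj_core_row] the_inv_into_f_f[OF inj_core_col]
  by auto

lemma witness_core_row_off: "s < 6 \<Longrightarrow> j < N \<Longrightarrow> j \<notin> core_cols \<Longrightarrow> witness $$ (core_row n1 n2 s, j) = 0"
  unfolding witness_def using core_row_less by auto

lemma witness_off_core: "i < N \<Longrightarrow> i \<notin> core_rows \<Longrightarrow> j < N \<Longrightarrow> witness $$ (i, j) = of_bool (j = f i)"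
  unfolding witness_def by auto

lemma sum_witness_core_row:
  assumes "s < 6"
  shows "(\<Sum>j<N. witness $$ (core_row n1 n2 s, j) * g j) = kappa * (\<Sum>t<6. M6 s t * g (core_col p t))"
proof -
  have "(\<Sum>j<N. witness $$ (core_row n1 n2 s, j) * g j)
      = (\<Sum>j\<in>core_cols. witness $$ (core_row n1 n2 s, j) * g j)"
    using core_col_less witness_core_row_off[OF assms] by (intro sum.mono_neutral_right) auto
  also have "\<dots> = (\<Sum>t<6. kappa * (M6 s t * g (core_col p t)))"
    using assms by (simp add: sum.reindex[OF inj_core_col] witness_core mult.assoc)
  finally show ?thesis by (simp add: sum_distrib_left)
qed

lemma sum_witness_off_core:
  assumes "i < N" "i \<notin> core_rows"
  shows "(\<Sum>j<N. witness $$ (i, j) * g j) = g (f i)"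
proof -
  have "(\<Sum>j<N. witness $$ (i, j) * g j) = (\<Sum>j<N. if j = f i then g j else 0)"
    by (intro sum.cong) (simp_all add: witness_off_core[OF assms])
  then show ?thesis using f_maps[OF assms] by simp
qed

lemma witness_rows_orthonormal:
  assumes "i < N" "i' < N"
  shows "(\<Sum>j<N. witness $$ (i, j) * cnj (witness $$ (i', j))) = of_bool (i = i')"
proof (cases "i \<in> core_rows")
  case True
  then obtain s where s: "s < 6" "i = core_row n1 n2 s" by auto
  show ?thesis
  proof (cases "i' \<in> core_rows")
    case True
    then obtain s' where s': "s' < 6" "i' = core_row n1 n2 s'" by auto
    have "(\<Sum>j<N. witness $$ (i, j) * cnj (witness $$ (i', j)))
        = kappa * cnj kappa * (\<Sum>t<6. M6 s t * cnj (M6 s' t))"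
      using s s' by (simp add: sum_witness_core_row witness_core sum_distrib_left ac_simps)
    also have "\<dots> = of_bool (s = s')"
      using s s' by (simp add: kappa_times_cnj M6_rows_orthogonal)
    finally show ?thesis
      using s s' inj_onD[OF inj_core_row, of s s'] by auto
  next
    case False
    have "cnj (witness $$ (i', core_col p t)) = 0" if "t < 6" for t
    proof -
      have "core_col p t \<noteq> f i'" using f_maps[OF assms(2) False] that by force
      then show ?thesis using that by (simp add: witness_off_core[OF assms(2) False] core_col_less)
    qed
    moreover have "i \<noteq> i'" using s False by auto
    ultimately show ?thesis
      using s by (simp add: sum_witness_core_row)
  qed
next
  case False
  then have "(\<Sum>j<N. witness $$ (i, j) * cnj (witness $$ (i', j))) = cnj (witness $$ (i', f i))"
    using assms(1) by (simp add: sum_witness_off_core)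
  also have "\<dots> = of_bool (i = i')"
  proof (cases "i' \<in> core_rows")
    case True
    then show ?thesis
      using False f_maps[OF assms(1) False] witness_core_row_off by auto
  next
    case False': False
    have "f i = f i' \<longleftrightarrow> i = i'"
      using f_bij assms False False' unfolding bij_betw_def inj_on_def by auto
    then show ?thesis
      using f_maps[OF assms(1) False] witness_off_core[OF assms(2) False'] by auto
  qed
  finally show ?thesis .
qed

lemma witness_unitary: "witness \<in> unitary_group N"
proof -
  have "witness * mat_adjoint witness = 1\<^sub>m N"
    using witness_carrier
    by (intro eq_matI)
      (simp_all add: index_mult_mat_sum[of _ N N _ N] witness_rows_orthonormal del: index_mult_mat(1))
  then show ?thesis using witness_carrier unfolding unitary_group_def by simp
qed

context
  fixes S :: "complex mat"
  assumes S_carrier: "S \<in> carrier_mat N N"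
    and S_symmetric: "transpose_mat S = S"
    and S_block_diagonal: "block_diagonal (block2_index p) S"
    and conjugate_block_diagonal:
      "block_diagonal (block3_index n1 n2) (witness * S * transpose_mat witness)"
begin

lemma S_index_sym: "k < N \<Longrightarrow> l < N \<Longrightarrow> S $$ (k, l) = S $$ (l, k)"
  using S_carrier S_symmetric by (metis carrier_matD index_transpose_mat(1))

lemma witness_S_core_row:
  "s < 6 \<Longrightarrow> l < N \<Longrightarrow>
    (witness * S) $$ (core_row n1 n2 s, l) = kappa * (\<Sum>t<6. M6 s t * S $$ (core_col p t, l))"
  using witness_carrier S_carrier core_row_less
  by (simp add: index_mult_mat_sum[of _ N N _ N] sum_witness_core_row del: index_mult_mat(1))

lemma conjugate_entry_vanishes:
  assumes "i < N" "j < N" "block3_index n1 n2 i \<noteq> block3_index n1 n2 j"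
  shows "(\<Sum>l<N. witness $$ (j, l) * (witness * S) $$ (i, l)) = 0"
proof -
  have "(\<Sum>l<N. witness $$ (j, l) * (witness * S) $$ (i, l))
      = (witness * S * transpose_mat witness) $$ (i, j)"
    using assms witness_carrier S_carrier
    by (subst index_mult_mat_sum[of _ N N _ N]) (auto simp: mult.commute intro: sum.cong)
  also have "\<dots> = 0"
    using conjugate_block_diagonal assms witness_carrier S_carrier by (simp add: block_diagonalD)
  finally show ?thesis .
qed

lemma core_equations:
  assumes "s < 6" "s' < 6" "s div 2 \<noteq> s' div 2"
  shows "(\<Sum>t'<6. M6 s' t' * (\<Sum>t<6. M6 s t * S $$ (core_col p t, core_col p t'))) = 0"
proof -
  have "0 = (\<Sum>l<N. witness $$ (core_row n1 n2 s', l) * (witness * S) $$ (core_row n1 n2 s, l))"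
    using assms core_row_less by (simp add: conjugate_entry_vanishes block3_index_core_row)
  also have "\<dots> = kappa * (\<Sum>t'<6. M6 s' t' * (witness * S) $$ (core_row n1 n2 s, core_col p t'))"
    using assms(2) by (rule sum_witness_core_row)
  also have "\<dots> = kappa * kappa *
      (\<Sum>t'<6. M6 s' t' * (\<Sum>t<6. M6 s t * S $$ (core_col p t, core_col p t')))"
    using assms(1) core_col_less by (simp add: witness_S_core_row sum_distrib_left ac_simps)
  finally show ?thesis using kappa_nonzero by simp
qed

lemma off_core_equations:
  assumes "s < 6" "r < N" "r \<notin> core_rows" "block3_index n1 n2 r \<noteq> s div 2"
  shows "(\<Sum>t<6. M6 s t * S $$ (core_col p t, f r)) = 0"
proof -
  have "0 = (\<Sum>l<N. witness $$ (r, l) * (witness * S) $$ (core_row n1 n2 s, l))"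
    using assms core_row_less by (simp add: conjugate_entry_vanishes block3_index_core_row)
  also have "\<dots> = (witness * S) $$ (core_row n1 n2 s, f r)"
    using assms(2,3) by (rule sum_witness_off_core)
  also have "\<dots> = kappa * (\<Sum>t<6. M6 s t * S $$ (core_col p t, f r))"
    using assms f_maps by (simp add: witness_S_core_row)
  finally show ?thesis using kappa_nonzero by simp
qed

lemma first_row_core_vanishes:
  assumes "r < 3"
  shows "S $$ (0, core_col p r) = 0"
proof -
  have "S $$ (core_col p 0, core_col p r) = 0"
  proof (rule M6_kernel_symmetric[where u = "\<lambda>t t'. S $$ (core_col p t, core_col p t')",
        OF _ _ _ assms])
    show "S $$ (core_col p t, core_col p t') = S $$ (core_col p t', core_col p t)"
      if "t < 6" "t' < 6" for t t'
      using that core_col_less by (simp add: S_index_sym)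
    show "S $$ (core_col p t, core_col p t') = 0" if "t < 3" "3 \<le> t'" "t' < 6" for t t'
      using that S_carrier core_col_less block2_index_core_col
      by (intro block_diagonalD[OF S_block_diagonal]) auto
    show "(\<Sum>t'<6. M6 s' t' * (\<Sum>t<6. M6 s t * S $$ (core_col p t, core_col p t'))) = 0"
      if "s < 6" "s' < 6" "s div 2 \<noteq> s' div 2" for s s'
      using that by (rule core_equations)
  qed
  then show ?thesis by (simp add: core_col_def)
qed

lemma first_row_off_core_vanishes:
  assumes "l < N" "l \<notin> core_cols" "block2_index p l = 0"
  shows "S $$ (0, l) = 0"
proof -
  have "l \<in> f ` ({..<N} - core_rows)"
    using f_bij assms(1,2) unfolding bij_betw_def by auto
  then obtain r where r: "r < N" "r \<notin> core_rows" "f r = l" by auto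
  have "S $$ (core_col p 0, l) = 0"
  proof (rule M6_kernel_vector[where x = "\<lambda>t. S $$ (core_col p t, l)"
        and b = "block3_index n1 n2 r"])
    show "S $$ (core_col p t, l) = 0" if "3 \<le> t" "t < 6" for t
      using that assms S_carrier core_col_less block2_index_core_col
      by (intro block_diagonalD[OF S_block_diagonal]) auto
    show "block3_index n1 n2 r < 3" by (simp add: block3_index_def)
    show "(\<Sum>t<6. M6 s t * S $$ (core_col p t, l)) = 0"
      if "s < 6" "s div 2 \<noteq> block3_index n1 n2 r" for s
      using that r off_core_equations by metis
  qed
  then show ?thesis by (simp add: core_col_def)
qed

lemma first_row_vanishes:
  assumes "l < N"
  shows "S $$ (0, l) = 0"
proof (cases "block2_index p l = 0")
  case False
  moreover have "block2_index p 0 = 0" using blocks_H by (simp add: block2_index_def)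
  ultimately show ?thesis
    using assms S_carrier by (intro block_diagonalD[OF S_block_diagonal]) auto
next
  case first_block: True
  show ?thesis
  proof (cases "l \<in> core_cols")
    case True
    then obtain t where t: "t < 6" "l = core_col p t" by auto
    with first_block have "t < 3" by (auto simp: block2_index_core_col split: if_splits)
    with t show ?thesis by (simp add: first_row_core_vanishes)
  next
    case False
    with assms first_block show ?thesis by (simp add: first_row_off_core_vanishes)
  qed
qed

end

lemma witness_not_in_products:
  "witness \<notin> {X * Y * Z | X Y Z. X \<in> block_U3 n1 n2 n3 \<and> Y \<in> orthogonal_group_in_U N
    \<and> Z \<in> block_U2 p q}"
proof
  assume "witness \<in> {X * Y * Z | X Y Z. X \<in> block_U3 n1 n2 n3 \<and> Y \<in> orthogonal_group_in_U N
    \<and> Z \<in> block_U2 p q}"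
  then obtain X Y Z where XYZ: "witness = X * Y * Z" "X \<in> block_U3 n1 n2 n3"
    "Y \<in> orthogonal_group_in_U N" "Z \<in> block_U2 p q" by auto
  have X: "X \<in> carrier_mat N N"
    using XYZ(2) block_U3_unitary[of n1 n2 n3] dims unitary_groupD(1) by auto
  have Z: "Z \<in> unitary_group N"
    using XYZ(4) block_U2_unitary by auto
  obtain S where S: "S \<in> unitary_group N" "transpose_mat S = S" "block_diagonal (block2_index p) S"
    "block_diagonal (block3_index n1 n2) (witness * S * transpose_mat witness)"
    unfolding XYZ(1)
    by (rule block_orthogonal_product_invariant[OF X block_U3_block_diagonal[OF XYZ(2)] XYZ(3)
          Z block_U2_block_diagonal[OF XYZ(4)]])
  obtain l where "l < N" "S $$ (0, l) \<noteq> 0"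
    by (rule unitary_group_row_nonzero[OF S(1), of 0]) (use blocks_H in auto)
  with S show False
    using first_row_vanishes unitary_groupD(1) by blast
qed

end

theorem proposition6p5:
  fixes n1 n2 n3 p q :: nat
  assumes "n1 + n2 + n3 = p + q"
    and "min p q \<ge> 3"
    and "min n1 (min n2 n3) \<ge> 2"
  shows "{X * Y * Z | X Y Z. X \<in> block_U3 n1 n2 n3 \<and> Y \<in> orthogonal_group_in_U (p + q)
            \<and> Z \<in> block_U2 p q} \<subset> unitary_group (p + q)"
proof -
  interpret block_sizes n1 n2 n3 p q
    using assms by unfold_locales auto
  obtain f where "bij_betw f ({..<N} - core_rows) ({..<N} - core_cols)"
    by (rule obtain_off_core_bijection)
  then interpret witness_layout n1 n2 n3 p q f
    by unfold_locales
  show ?thesis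
    using block_orthogonal_products_unitary[OF dims] witness_unitary witness_not_in_products
    by blast
qed

end
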